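(* Let $f$ be a $C$-class classifier with $C\ge 2$ whose outputs satisfy $f(x)\in(0,1)^C$, $\sum_c f(x)_c=1$ for all $x$, and let $S$, $\mathcal{D}$ be as in the context. Let $\mathcal{Q}_{cvx}$ be the family of all convex subsets of $\mathbb{R}^{2C}$. For every threshold $\tau\in\mathbb{R}$ and every $m\in\{m_{msp,\tau},m_{ent,\tau},m_{ce,\tau},m_{me,\tau}\}$, $$\mathrm{Adv}(m;f,S,\mathcal{D})\le D_{\mathcal{Q}_{cvx}}(S,\mathcal{D}).$$
   Context: A labeled data point is $z=(x,y)$ with $y\in\{0,1\}^C$ one-hot; $f(x)_c$ denotes the $c$-th coordinate of $f(x)$. $S$ is a finite training set (multiset) of labeled points, $\mathbb{P}_{z\sim S}$ is uniform over $S$, and $\mathcal{D}$ is a probability distribution on labeled points. An MIA is a map $m(z,f)\in\{0,1\}$ with advantage $\mathrm{Adv}(m;f,S,\mathcal{D}):=\mathbb{P}_{z\sim S}(m(z,f)=1)-\mathbb{P}_{z\sim\mathcal{D}}(m(z,f)=1)$. For a score function $h$ and threshold $\tau$, the thresholded MIA is $m_{h,\tau}(z,f)=\mathbb{1}[h(z,f)<\tau]$. The scores are: $msp(z,f)=-\max_{c\in[C]}f(x)_c$; $ent(z,f)=-\sum_{c\in[C]}f(x)_c\log f(x)_c$; $ce(z,f)=-\sum_{c\in[C]}y_c\log f(x)_c$; $me(z,f)=-\sum_{c\in[C]}\big((1-f(x)_c)\log(f(x)_c)\,y_c+f(x)_c\log(1-f(x)_c)\,(1-y_c)\big)$. For $Q\subseteq\mathbb{R}^{2C}$,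 $D(S,\mathcal{D}\mid Q):=\left|\mathbb{P}_{(x,y)\sim S}((f(x),y)\in Q)-\mathbb{P}_{(x,y)\sim\mathcal{D}}((f(x),y)\in Q)\right|$, and for a family $\mathcal{Q}$, $D_{\mathcal{Q}}(S,\mathcal{D}):=\sup_{Q\in\mathcal{Q}}D(S,\mathcal{D}\mid Q)$. *)

theory Defs
  imports "HOL-Probability.Probability" "HOL-Library.Multiset"
begin

text \<open>Labeled points z = (x, y) with x :: 'x and y :: real^'c (C = CARD('c) classes).
  The classifier output f x :: real^'c; R^{2C} is rendered as real^'c \<times> real^'c.\<close>

definition one_hot :: "real^'c::finite \<Rightarrow> bool" where
  "one_hot y \<longleftrightarrow> (\<forall>c. y $ c = 0 \<or> y $ c = 1) \<and> (\<Sum>c\<in>UNIV. y $ c) = 1"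

definition msp :: "('x \<times> (real^'c::finite)) \<Rightarrow> ('x \<Rightarrow> real^'c) \<Rightarrow> real" where
  "msp z f = - (MAX c. f (fst z) $ c)"

definition ent :: "('x \<times> (real^'c::finite)) \<Rightarrow> ('x \<Rightarrow> real^'c) \<Rightarrow> real" where
  "ent z f = - (\<Sum>c\<in>UNIV. f (fst z) $ c * ln (f (fst z) $ c))"

definition ce :: "('x \<times> (real^'c::finite)) \<Rightarrow> ('x \<Rightarrow> real^'c) \<Rightarrow> real" where
  "ce z f = - (\<Sum>c\<in>UNIV. snd z $ c * ln (f (fst z) $ c))"

definition me :: "('x \<times> (real^'c::finite)) \<Rightarrow> ('x \<Rightarrow> real^'c) \<Rightarrow> real" where
  "me z f = - (\<Sum>c\<in>UNIV. (1 - f (fst z) $ c) * ln (f (fst z) $ c) * snd z $ c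
                         + f (fst z) $ c * ln (1 - f (fst z) $ c) * (1 - snd z $ c))"

definition mia_thr :: "('z \<Rightarrow> 'f \<Rightarrow> real) \<Rightarrow> real \<Rightarrow> 'z \<Rightarrow> 'f \<Rightarrow> nat" where
  "mia_thr h \<tau> z f = (if h z f < \<tau> then 1 else 0)"

definition prob_S :: "'z multiset \<Rightarrow> ('z \<Rightarrow> bool) \<Rightarrow> real" where
  "prob_S S P = real (size (filter_mset P S)) / real (size S)"

definition prob_D :: "'z measure \<Rightarrow> ('z \<Rightarrow> bool) \<Rightarrow> real" where
  "prob_D D P = measure D {z \<in> space D. P z}"

definition Adv :: "('z \<Rightarrow> 'f \<Rightarrow> nat) \<Rightarrow> 'f \<Rightarrow> 'z multiset \<Rightarrow> 'z measure \<Rightarrow> real" where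
  "Adv m f S D = prob_S S (\<lambda>z. m z f = 1) - prob_D D (\<lambda>z. m z f = 1)"

definition Dist :: "('x \<Rightarrow> real^'c::finite) \<Rightarrow> ('x \<times> (real^'c)) multiset \<Rightarrow> ('x \<times> (real^'c)) measure
                   \<Rightarrow> ((real^'c) \<times> (real^'c)) set \<Rightarrow> real" where
  "Dist f S D Q = \<bar>prob_S S (\<lambda>(x,y). (f x, y) \<in> Q) - prob_D D (\<lambda>(x,y). (f x, y) \<in> Q)\<bar>"

definition Dist_fam :: "((real^'c::finite) \<times> (real^'c)) set set \<Rightarrow> ('x \<Rightarrow> real^'c)
                   \<Rightarrow> ('x \<times> (real^'c)) multiset \<Rightarrow> ('x \<times> (real^'c)) measure \<Rightarrow> real" where
  "Dist_fam \<Q> f S D = (SUP Q\<in>\<Q>. Dist f S D Q)"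

definition Q_cvx :: "((real^'c::finite) \<times> (real^'c)) set set" where
  "Q_cvx = {Q. convex Q \<and> Q \<in> sets borel}"

end

theory Submission
  imports Defs
begin

text \<open>For a fixed one-hot label the scores msp and ent are concave and ce and me are convex
  functions of the classifier output p. In the concave case the event {score < \<tau>} is the
  complement of a convex set Q, and the advantage is a difference of the probabilities of Q.
  In the convex case the sublevel sets L_k of the score for the label e_k are glued into
  one convex set of pairs (p, y): the intersection over k of the sets
  {infdist p L_k \<le> C (1 - y_k)} cuts out the closure of L_k at y = e_k and imposes nothing at
  y = e_j, j \<noteq> k, because the open unit box has diameter at most C. Strict thresholds are
  reached from non-strict ones because S is finite.\<close>

lemma prob_S_bounds:
  assumes "S \<noteq> {#}" shows "0 \<le> prob_S S P" "prob_S S P \<le> 1"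
proof -
  have "size (filter_mset P S) \<le> size S" by (rule size_filter_mset_lesseq)
  moreover have "size S > 0" using assms by (simp add: nonempty_has_size)
  ultimately show "0 \<le> prob_S S P" "prob_S S P \<le> 1" unfolding prob_S_def
    by (auto simp: divide_le_eq_1)
qed

lemma prob_S_not:
  assumes "S \<noteq> {#}" shows "prob_S S (\<lambda>z. \<not> P z) = 1 - prob_S S P"
proof -
  have "size S = size (filter_mset P S) + size (filter_mset (\<lambda>z. \<not> P z) S)"
    by (metis multiset_partition size_union)
  then have "real (size (filter_mset (\<lambda>z. \<not> P z) S)) = real (size S) - real (size (filter_mset P S))"
    by simp
  moreover have "size S > 0" using assms by (simp add: nonempty_has_size)
  ultimately show ?thesis using assms unfolding prob_S_def by (simp add: diff_divide_distrib)
qed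

lemma prob_S_cong: "(\<And>z. z \<in># S \<Longrightarrow> P z = P' z) \<Longrightarrow> prob_S S P = prob_S S P'"
  unfolding prob_S_def by (metis filter_mset_cong0)

lemma prob_D_bounds:
  assumes "prob_space D" shows "0 \<le> prob_D D P" "prob_D D P \<le> 1"
  unfolding prob_D_def using prob_space.prob_le_1[OF assms] by auto

lemma prob_D_cong: "(\<And>z. z \<in> space D \<Longrightarrow> P z = P' z) \<Longrightarrow> prob_D D P = prob_D D P'"
  unfolding prob_D_def by (metis (mono_tags, lifting) Collect_cong)

lemma Dist_le_Dist_fam:
  assumes "S \<noteq> {#}" "prob_space D" "Q \<in> Q_cvx"
  shows "Dist f S D Q \<le> Dist_fam Q_cvx f S D"
proof -
  have "Dist f S D Q' \<le> 1" for Q'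
    unfolding Dist_def using prob_S_bounds[OF assms(1)] prob_D_bounds[OF assms(2)]
    by (smt (verit))
  then show ?thesis
    unfolding Dist_fam_def by (intro cSUP_upper[OF assms(3)] bdd_aboveI[where M=1]) auto
qed

lemma prob_diff_le_Dist_fam_mem:
  assumes "S \<noteq> {#}" "prob_space D" "Q \<in> Q_cvx"
    and "\<And>z. z \<in># S \<Longrightarrow> P z \<longleftrightarrow> (f (fst z), snd z) \<in> Q"
    and "\<And>z. z \<in> space D \<Longrightarrow> P z \<longleftrightarrow> (f (fst z), snd z) \<in> Q"
  shows "prob_S S P - prob_D D P \<le> Dist_fam Q_cvx f S D"
proof -
  let ?R = "\<lambda>(x, y). (f x, y) \<in> Q"
  have "prob_S S P = prob_S S ?R" "prob_D D P = prob_D D ?R"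
    using assms(4,5) by (auto intro!: prob_S_cong prob_D_cong split: prod.splits)
  then have "prob_S S P - prob_D D P \<le> Dist f S D Q" unfolding Dist_def by simp
  also have "\<dots> \<le> Dist_fam Q_cvx f S D" by (rule Dist_le_Dist_fam[OF assms(1-3)])
  finally show ?thesis .
qed

lemma prob_diff_le_Dist_fam_not_mem:
  assumes "S \<noteq> {#}" and D: "prob_space D" and "Q \<in> Q_cvx"
    and meas: "(\<lambda>z. (f (fst z), snd z)) \<in> D \<rightarrow>\<^sub>M borel"
    and "\<And>z. z \<in># S \<Longrightarrow> P z \<longleftrightarrow> (f (fst z), snd z) \<notin> Q"
    and "\<And>z. z \<in> space D \<Longrightarrow> P z \<longleftrightarrow> (f (fst z), snd z) \<notin> Q"
  shows "prob_S S P - prob_D D P \<le> Dist_fam Q_cvx f S D"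
proof -
  let ?R = "\<lambda>(x, y). (f x, y) \<in> Q"
  have "prob_S S P = prob_S S (\<lambda>z. \<not> ?R z)"
    using assms(5) by (auto intro!: prob_S_cong split: prod.splits)
  then have S_eq: "prob_S S P = 1 - prob_S S ?R" using prob_S_not[OF assms(1)] by simp
  have "{z \<in> space D. ?R z} = (\<lambda>z. (f (fst z), snd z)) -` Q \<inter> space D"
    by (auto simp: case_prod_beta)
  then have R_sets: "{z \<in> space D. ?R z} \<in> sets D"
    using measurable_sets[OF meas] assms(3) by (simp add: Q_cvx_def)
  have "{z \<in> space D. P z} = space D - {z \<in> space D. ?R z}"
    using assms(6) by (auto simp: case_prod_beta)
  then have D_eq: "prob_D D P = 1 - prob_D D ?R"
    unfolding prob_D_def using prob_space.prob_compl[OF D R_sets] by simp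
  have "prob_S S P - prob_D D P \<le> Dist f S D Q" unfolding Dist_def S_eq D_eq by simp
  also have "\<dots> \<le> Dist_fam Q_cvx f S D" by (rule Dist_le_Dist_fam[OF assms(1-3)])
  finally show ?thesis .
qed

lemma prob_diff_less_le:
  fixes g :: "'z \<Rightarrow> real"
  assumes D: "prob_space D" and g: "g \<in> borel_measurable D"
    and le: "\<And>t. t < \<tau> \<Longrightarrow> prob_S S (\<lambda>z. g z \<le> t) - prob_D D (\<lambda>z. g z \<le> t) \<le> B"
  shows "prob_S S (\<lambda>z. g z < \<tau>) - prob_D D (\<lambda>z. g z < \<tau>) \<le> B"
proof -
  define V where "V = g ` {z \<in> set_mset S. g z < \<tau>}"
  define t where "t = Max (insert (\<tau> - 1) V)"
  have "finite V" unfolding V_def by simp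
  then have "t < \<tau>" unfolding t_def V_def by auto
  have "g z < \<tau> \<longleftrightarrow> g z \<le> t" if "z \<in># S" for z
  proof
    assume "g z < \<tau>"
    then have "g z \<in> V" using that unfolding V_def by auto
    then show "g z \<le> t" unfolding t_def using \<open>finite V\<close> by simp
  qed (use \<open>t < \<tau>\<close> in linarith)
  then have S_eq: "prob_S S (\<lambda>z. g z < \<tau>) = prob_S S (\<lambda>z. g z \<le> t)" by (rule prob_S_cong)
  have "{z \<in> space D. g z < \<tau>} \<in> sets D" using g by measurable
  then have "prob_D D (\<lambda>z. g z \<le> t) \<le> prob_D D (\<lambda>z. g z < \<tau>)"
    unfolding prob_D_def using \<open>t < \<tau>\<close>
    by (intro finite_measure.finite_measure_mono[OF prob_space.finite_measure[OF D]]) auto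
  then show ?thesis using le[OF \<open>t < \<tau>\<close>] S_eq by linarith
qed

lemma one_hot_axis:
  fixes y :: "real^'c::finite"
  assumes "one_hot y" obtains k where "y = axis k 1"
proof -
  have y01: "\<And>c. y$c = 0 \<or> y$c = 1" and sum1: "(\<Sum>c\<in>UNIV. y$c) = 1"
    using assms unfolding one_hot_def by auto
  then obtain k where k: "y$k = 1" by (metis sum.neutral zero_neq_one)
  have "(\<Sum>c\<in>UNIV. y$c) = y$k + (\<Sum>c\<in>UNIV-{k}. y$c)" by (simp add: sum.remove)
  then have "(\<Sum>c\<in>UNIV-{k}. y$c) = 0" using sum1 k by simp
  moreover have "0 \<le> y$c" for c using y01[of c] by auto
  ultimately have "\<forall>c\<in>UNIV-{k}. y$c = 0" by (simp add: sum_nonneg_eq_0_iff)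
  then have "y = axis k 1" using k by (auto simp: axis_def vec_eq_iff)
  then show thesis by (rule that)
qed

lemma convex_on_infdist:
  fixes C :: "'a::real_normed_vector set"
  assumes "convex C"
  shows "convex_on UNIV (\<lambda>x. infdist x C)"
proof (cases "C = {}")
  case True then show ?thesis by (simp add: infdist_def convex_on_const)
next
  case False
  have "infdist (u *\<^sub>R x + v *\<^sub>R y) C \<le> u * infdist x C + v * infdist y C + e"
    if uv: "0 \<le> u" "0 \<le> v" "u + v = 1" and e: "0 < e" for x y u v e
  proof -
    have bdd: "bdd_below ((\<lambda>a. dist z a) ` C)" for z by (rule bdd_belowI[where m=0]) auto
    have near: "\<exists>a\<in>C. dist z a < infdist z C + e" for z
      using cINF_less_iff[OF False bdd, of z "infdist z C + e"] e False by (simp add: infdist_notempty)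
    obtain a b where a: "a \<in> C" "dist x a < infdist x C + e"
      and b: "b \<in> C" "dist y b < infdist y C + e"
      using near[of x] near[of y] by blast
    have "infdist (u *\<^sub>R x + v *\<^sub>R y) C \<le> dist (u *\<^sub>R x + v *\<^sub>R y) (u *\<^sub>R a + v *\<^sub>R b)"
      using convexD[OF assms a(1) b(1) uv] by (rule infdist_le)
    also have "\<dots> = norm (u *\<^sub>R (x - a) + v *\<^sub>R (y - b))"
      by (simp add: dist_norm algebra_simps)
    also have "\<dots> \<le> u * dist x a + v * dist y b"
      using norm_triangle_ineq[of "u *\<^sub>R (x - a)" "v *\<^sub>R (y - b)"] uv by (simp add: dist_norm)
    also have "\<dots> \<le> u * (infdist x C + e) + v * (infdist y C + e)"
      using a b uv by (intro add_mono mult_left_mono) auto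
    also have "\<dots> = u * infdist x C + v * infdist y C + e"
      using uv by (simp add: algebra_simps flip: distrib_left)
    finally show ?thesis .
  qed
  then show ?thesis unfolding convex_on_def by (auto intro: field_le_epsilon)
qed

lemma convex_sublevel:
  fixes g :: "'a::real_vector \<Rightarrow> real"
  assumes "convex_on A g" shows "convex {p \<in> A. g p \<le> t}"
proof (rule convexI)
  fix x y and u v :: real
  assume x: "x \<in> {p \<in> A. g p \<le> t}" and y: "y \<in> {p \<in> A. g p \<le> t}"
    and uv: "0 \<le> u" "0 \<le> v" "u + v = 1"
  have "g (u *\<^sub>R x + v *\<^sub>R y) \<le> u * g x + v * g y"
    using assms x y uv unfolding convex_on_def by blast
  also have "\<dots> \<le> u * t + v * t" using x y uv by (intro add_mono mult_left_mono) auto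
  also have "\<dots> = t" using uv by (metis distrib_right mult_1)
  finally show "u *\<^sub>R x + v *\<^sub>R y \<in> {p \<in> A. g p \<le> t}"
    using convexD[OF convex_on_imp_convex[OF assms]] x y uv by auto
qed

lemma convex_on_sum_components:
  fixes g :: "'c::finite \<Rightarrow> real \<Rightarrow> real"
  assumes "convex I" "\<And>c. convex_on I (g c)"
  shows "convex_on {p::real^'c. \<forall>c. p$c \<in> I} (\<lambda>p. \<Sum>c\<in>UNIV. g c (p$c))"
  unfolding convex_on_def
proof (intro conjI ballI allI impI)
  show "convex {p::real^'c. \<forall>c. p$c \<in> I}" by (rule convex_box_cart) (simp add: assms(1))
  fix x y :: "real^'c" and u v :: real
  assume x: "x \<in> {p. \<forall>c. p$c \<in> I}" and y: "y \<in> {p. \<forall>c. p$c \<in> I}"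
    and uv: "0 \<le> u" "0 \<le> v" "u + v = 1"
  have "(\<Sum>c\<in>UNIV. g c ((u *\<^sub>R x + v *\<^sub>R y)$c)) \<le> (\<Sum>c\<in>UNIV. u * g c (x$c) + v * g c (y$c))"
    using assms(2) x y uv by (intro sum_mono) (simp add: convex_on_def)
  also have "\<dots> = u * (\<Sum>c\<in>UNIV. g c (x$c)) + v * (\<Sum>c\<in>UNIV. g c (y$c))"
    by (simp add: sum.distrib sum_distrib_left)
  finally show "(\<Sum>c\<in>UNIV. g c ((u *\<^sub>R x + v *\<^sub>R y)$c))
      \<le> u * (\<Sum>c\<in>UNIV. g c (x$c)) + v * (\<Sum>c\<in>UNIV. g c (y$c))" .
qed

lemma convex_on_x_ln_x: "convex_on {0<..} (\<lambda>x::real. x * ln x)"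
proof (rule convex_on_realI[where f'="\<lambda>x. ln x + 1"])
  fix x :: real assume "x \<in> {0<..}"
  then show "((\<lambda>x. x * ln x) has_real_derivative ln x + 1) (at x)"
    by (auto intro!: derivative_eq_intros)
qed auto

lemma convex_on_neg_ln: "convex_on {0<..<1} (\<lambda>x::real. - ln x)"
proof (rule convex_on_realI[where f'="\<lambda>x. - 1 / x"])
  fix x :: real assume "x \<in> {0<..<1}"
  then show "((\<lambda>x. - ln x) has_real_derivative - 1 / x) (at x)"
    by (auto intro!: derivative_eq_intros)
qed (auto simp: divide_simps)

lemma convex_on_neg_one_minus_x_ln_x: "convex_on {0<..<1} (\<lambda>x::real. - ((1 - x) * ln x))"
proof (rule convex_on_realI[where f'="\<lambda>x. ln x - 1 / x + 1"])
  fix x :: real assume "x \<in> {0<..<1}"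
  then show "((\<lambda>x. - ((1 - x) * ln x)) has_real_derivative ln x - 1 / x + 1) (at x)"
    by (auto intro!: derivative_eq_intros simp: field_simps)
next
  fix x y :: real assume "x \<in> {0<..<1}" "y \<in> {0<..<1}" "x \<le> y"
  then have "ln x \<le> ln y" "1 / y \<le> 1 / x" by (auto simp: divide_simps)
  then show "ln x - 1 / x + 1 \<le> ln y - 1 / y + 1" by linarith
qed auto

lemma convex_on_neg_x_ln_one_minus_x: "convex_on {0<..<1} (\<lambda>x::real. - (x * ln (1 - x)))"
proof (rule convex_on_realI[where f'="\<lambda>x. - ln (1 - x) + 1 / (1 - x) - 1"])
  fix x :: real assume "x \<in> {0<..<1}"
  then show "((\<lambda>x. - (x * ln (1 - x))) has_real_derivative - ln (1 - x) + 1 / (1 - x) - 1) (at x)"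
    by (auto intro!: derivative_eq_intros simp: field_simps)
next
  fix x y :: real assume "x \<in> {0<..<1}" "y \<in> {0<..<1}" "x \<le> y"
  then have "ln (1 - y) \<le> ln (1 - x)" "1 / (1 - x) \<le> 1 / (1 - y)" by (auto simp: divide_simps)
  then show "- ln (1 - x) + 1 / (1 - x) - 1 \<le> - ln (1 - y) + 1 / (1 - y) - 1" by linarith
qed auto

definition open_unit_box :: "(real^'c::finite) set" where
  "open_unit_box = {p. \<forall>c. p$c \<in> {0<..<1}}"

lemma open_open_unit_box: "open (open_unit_box :: (real^'c::finite) set)"
proof -
  have "open_unit_box = (\<Inter>c\<in>(UNIV::'c set). {p::real^'c. 0 < p$c \<and> p$c < 1})"
    by (auto simp: open_unit_box_def)
  moreover have "open (\<Inter>c\<in>(UNIV::'c set). {p::real^'c. 0 < p$c \<and> p$c < 1})"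
    by (intro open_INT finite_UNIV ballI open_Collect_conj open_Collect_less continuous_intros) auto
  ultimately show ?thesis by simp
qed

lemma dist_open_unit_box_le_card:
  fixes p q :: "real^'c::finite"
  assumes "p \<in> open_unit_box" "q \<in> open_unit_box"
  shows "dist p q \<le> real CARD('c)"
proof -
  have "dist p q \<le> (\<Sum>c\<in>UNIV. \<bar>(p - q)$c\<bar>)" unfolding dist_norm by (rule norm_le_l1_cart)
  also have "\<dots> \<le> (\<Sum>c\<in>(UNIV::'c set). 1)"
  proof (rule sum_mono)
    fix c
    have "p$c \<in> {0<..<1}" "q$c \<in> {0<..<1}" using assms by (auto simp: open_unit_box_def)
    then show "\<bar>(p - q)$c\<bar> \<le> 1" by auto
  qed
  finally show ?thesis by simp
qed

lemma closure_sublevel_le: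
  fixes G :: "'a::metric_space \<Rightarrow> real"
  assumes "continuous_on A G" "p \<in> A" "p \<in> closure {q \<in> A. G q \<le> t}"
  shows "G p \<le> t"
proof -
  obtain s where s: "\<And>n. s n \<in> {q \<in> A. G q \<le> t}" and lim: "s \<longlonglongrightarrow> p"
    using assms(3) unfolding closure_sequential by blast
  have "(\<lambda>n. G (s n)) \<longlonglongrightarrow> G p"
    using continuous_on_tendsto_compose[OF assms(1) lim assms(2)] s by auto
  then show ?thesis by (rule LIMSEQ_le_const2) (use s in auto)
qed

text \<open>The empty case needs its own formula, since infdist p {} = 0.\<close>
definition one_hot_gate :: "(real^'c::finite) set \<Rightarrow> 'c \<Rightarrow> ((real^'c) \<times> (real^'c)) set" where
  "one_hot_gate C k =
    (if C = {} then {z. snd z $ k \<le> 0}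
     else {z. infdist (fst z) C \<le> real CARD('c) * (1 - snd z $ k)})"

lemma convex_one_hot_gate:
  fixes C :: "(real^'c::finite) set"
  assumes "convex C" shows "convex (one_hot_gate C k)"
proof -
  have linear: "convex_on UNIV (\<lambda>z::(real^'c)\<times>(real^'c). a * snd z $ k)" for a
    by (auto simp: convex_on_def algebra_simps)
  have "convex_on UNIV (\<lambda>z::(real^'c)\<times>(real^'c). infdist (fst z) C)"
    using convex_on_infdist[OF assms] by (simp add: convex_on_def)
  then have "convex {z \<in> UNIV. infdist (fst z) C + real CARD('c) * snd z $ k \<le> real CARD('c)}"
    by (intro convex_sublevel convex_on_add linear)
  moreover have "convex {z::(real^'c)\<times>(real^'c). snd z $ k \<le> 0}"
    using convex_sublevel[OF linear[of 1], of 0] by simp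
  ultimately show ?thesis unfolding one_hot_gate_def by (simp add: algebra_simps)
qed

lemma closed_one_hot_gate: "closed (one_hot_gate C k)"
  unfolding one_hot_gate_def by (auto intro!: closed_Collect_le continuous_intros)

lemma one_hot_gate_axis_self: "(p, axis k 1) \<in> one_hot_gate C k \<longleftrightarrow> p \<in> closure C"
proof (cases "C = {}")
  case False
  then have "(p, axis k 1) \<in> one_hot_gate C k \<longleftrightarrow> infdist p C = 0"
    unfolding one_hot_gate_def using infdist_nonneg[of p C] by (auto simp: axis_def)
  then show ?thesis using in_closure_iff_infdist_zero[OF False] by simp
qed (simp add: one_hot_gate_def axis_def)

lemma one_hot_gate_axis_other:
  fixes C :: "(real^'c::finite) set"
  assumes "C \<subseteq> open_unit_box" "p \<in> open_unit_box" "j \<noteq> k"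
  shows "(p, axis j 1) \<in> one_hot_gate C k"
proof (cases "C = {}")
  case False
  then obtain q where q: "q \<in> C" by blast
  have "infdist p C \<le> dist p q" using q by (rule infdist_le)
  also have "\<dots> \<le> real CARD('c)" using assms(1,2) q by (intro dist_open_unit_box_le_card) auto
  finally have "infdist p C \<le> real CARD('c)" .
  then show ?thesis using False assms(3) by (simp add: one_hot_gate_def axis_def)
qed (use assms(3) in \<open>simp add: one_hot_gate_def axis_def\<close>)

lemma Q_cvx_one_hot_sublevel:
  fixes F :: "real^'c::finite \<Rightarrow> real^'c \<Rightarrow> real"
  assumes convex: "\<And>k. convex_on open_unit_box (F (axis k 1))"
  obtains Q where "Q \<in> Q_cvx"
    and "\<And>p y. p \<in> open_unit_box \<Longrightarrow> one_hot y \<Longrightarrow> (p, y) \<in> Q \<longleftrightarrow> F y p \<le> t"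
proof
  define C where "C k = {p \<in> open_unit_box. F (axis k 1) p \<le> t}" for k
  define Q where "Q = (\<Inter>k. one_hot_gate (C k) k)"
  have "convex (C k)" for k unfolding C_def by (rule convex_sublevel[OF convex])
  then have "convex Q" unfolding Q_def by (intro convex_INT convex_one_hot_gate)
  moreover have "closed Q" unfolding Q_def by (simp add: closed_INT closed_one_hot_gate)
  ultimately show "Q \<in> Q_cvx" by (simp add: Q_cvx_def borel_closed)
  fix p y :: "real^'c" assume p: "p \<in> open_unit_box" and "one_hot y"
  obtain j where j: "y = axis j 1" using \<open>one_hot y\<close> by (rule one_hot_axis)
  have "(p, y) \<in> one_hot_gate (C k) k" if "k \<noteq> j" for k
    using one_hot_gate_axis_other[of "C k" p j k] p j that unfolding C_def by auto
  then have "(p, y) \<in> Q \<longleftrightarrow> (p, y) \<in> one_hot_gate (C j) j" unfolding Q_def INT_iff by (metis UNIV_I)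
  also have "\<dots> \<longleftrightarrow> p \<in> closure (C j)" unfolding j by (rule one_hot_gate_axis_self)
  also have "\<dots> \<longleftrightarrow> p \<in> C j"
  proof
    have cont: "continuous_on open_unit_box (F (axis j 1))"
      by (rule convex_on_continuous[OF open_open_unit_box convex])
    assume "p \<in> closure (C j)"
    then have "F (axis j 1) p \<le> t" unfolding C_def by (rule closure_sublevel_le[OF cont p])
    with p show "p \<in> C j" by (simp add: C_def)
  qed (rule closure_subset[THEN subsetD])
  finally show "(p, y) \<in> Q \<longleftrightarrow> F y p \<le> t" using p j unfolding C_def by simp
qed

lemma borel_measurable_fst_nth [measurable]:
  "(\<lambda>z::(real^'c::finite) \<times> (real^'c). fst z $ c) \<in> borel_measurable borel"
  by (intro borel_measurable_continuous_onI continuous_intros)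

lemma borel_measurable_snd_nth [measurable]:
  "(\<lambda>z::(real^'c::finite) \<times> (real^'c). snd z $ c) \<in> borel_measurable borel"
  by (intro borel_measurable_continuous_onI continuous_intros)

lemma prob_diff_convex_score_le_Dist_fam:
  fixes F :: "real^'c::finite \<Rightarrow> real^'c \<Rightarrow> real" and f :: "'x \<Rightarrow> real^'c"
  assumes S: "S \<noteq> {#}" and D: "prob_space D"
    and meas: "(\<lambda>z. (f (fst z), snd z)) \<in> D \<rightarrow>\<^sub>M borel"
    and one_hot_S: "\<forall>z\<in>#S. one_hot (snd z)" and one_hot_D: "\<forall>z\<in>space D. one_hot (snd z)"
    and f_box: "\<And>x. f x \<in> open_unit_box"
    and convex: "\<And>k. convex_on open_unit_box (F (axis k 1))"
    and F_meas: "(\<lambda>z. F (snd z) (fst z)) \<in> borel_measurable borel"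
  shows "prob_S S (\<lambda>z. F (snd z) (f (fst z)) < \<tau>) - prob_D D (\<lambda>z. F (snd z) (f (fst z)) < \<tau>)
    \<le> Dist_fam Q_cvx f S D"
proof (rule prob_diff_less_le[OF D])
  show "(\<lambda>z. F (snd z) (f (fst z))) \<in> borel_measurable D"
    using measurable_comp[OF meas F_meas] by (simp add: comp_def)
  fix t
  obtain Q where "Q \<in> Q_cvx"
    and Q: "\<And>p y. p \<in> open_unit_box \<Longrightarrow> one_hot y \<Longrightarrow> (p, y) \<in> Q \<longleftrightarrow> F y p \<le> t"
    using Q_cvx_one_hot_sublevel[of F t, OF convex] by blast
  have "F (snd z) (f (fst z)) \<le> t \<longleftrightarrow> (f (fst z), snd z) \<in> Q" if "one_hot (snd z)" for z
    using Q[OF f_box that] by simp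
  then show "prob_S S (\<lambda>z. F (snd z) (f (fst z)) \<le> t) - prob_D D (\<lambda>z. F (snd z) (f (fst z)) \<le> t)
      \<le> Dist_fam Q_cvx f S D"
    using one_hot_S one_hot_D by (intro prob_diff_le_Dist_fam_mem[OF S D \<open>Q \<in> Q_cvx\<close>]) auto
qed

lemma sum_axis_mult: "(\<Sum>c\<in>UNIV. axis k 1 $ c * g c) = (g k :: real)"
proof -
  have "axis k 1 $ c * g c = (if c = k then g k else 0)" for c by (simp add: axis_def)
  then show ?thesis by simp
qed

lemma convex_on_ce_axis:
  "convex_on open_unit_box (\<lambda>p::real^'c::finite. - (\<Sum>c\<in>UNIV. axis k 1 $ c * ln (p $ c)))"
proof -
  have "convex_on {0<..<1} (\<lambda>x. if c = k then - ln x else 0)" for c :: 'c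
    by (cases "c = k") (simp_all add: convex_on_neg_ln convex_on_const)
  then have "convex_on open_unit_box (\<lambda>p::real^'c. \<Sum>c\<in>UNIV. if c = k then - ln (p $ c) else 0)"
    unfolding open_unit_box_def by (intro convex_on_sum_components) auto
  then show ?thesis by (simp add: sum_axis_mult)
qed

lemma convex_on_me_axis:
  "convex_on open_unit_box (\<lambda>p::real^'c::finite. - (\<Sum>c\<in>UNIV.
      (1 - p $ c) * ln (p $ c) * axis k 1 $ c + p $ c * ln (1 - p $ c) * (1 - axis k 1 $ c)))"
proof -
  have "convex_on {0<..<1}
      (\<lambda>x. if c = k then - ((1 - x) * ln x) else - (x * ln (1 - x)))" for c :: 'c
    by (cases "c = k")
      (simp_all add: convex_on_neg_one_minus_x_ln_x convex_on_neg_x_ln_one_minus_x)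
  then have "convex_on open_unit_box (\<lambda>p::real^'c. \<Sum>c\<in>UNIV.
      if c = k then - ((1 - p $ c) * ln (p $ c)) else - (p $ c * ln (1 - p $ c)))"
    unfolding open_unit_box_def by (intro convex_on_sum_components) auto
  moreover have "(\<Sum>c\<in>UNIV. if c = k then - ((1 - p $ c) * ln (p $ c)) else - (p $ c * ln (1 - p $ c)))
      = - (\<Sum>c\<in>UNIV. (1 - p $ c) * ln (p $ c) * axis k 1 $ c + p $ c * ln (1 - p $ c) * (1 - axis k 1 $ c))"
    for p :: "real^'c"
    unfolding sum_negf[symmetric] by (rule sum.cong) (auto simp: axis_def)
  ultimately show ?thesis by simp
qed

lemma Adv_mia_thr:
  "Adv (mia_thr h \<tau>) f S D = prob_S S (\<lambda>z. h z f < \<tau>) - prob_D D (\<lambda>z. h z f < \<tau>)"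
  unfolding Adv_def mia_thr_def by simp

lemma Adv_msp_le_Dist_fam:
  fixes f :: "'x \<Rightarrow> real^'c::finite"
  assumes S: "S \<noteq> {#}" and D: "prob_space D"
    and meas: "(\<lambda>z. (f (fst z), snd z)) \<in> D \<rightarrow>\<^sub>M borel"
  shows "Adv (mia_thr msp \<tau>) f S D \<le> Dist_fam Q_cvx f S D"
proof -
  define Q where "Q = {p::real^'c. \<forall>c. p$c \<le> - \<tau>} \<times> (UNIV :: (real^'c) set)"
  have "Q \<in> Q_cvx" unfolding Q_cvx_def Q_def
    by (auto intro!: convex_Times convex_box_cart borel_closed closed_Times closed_Collect_all
        closed_Collect_le continuous_intros simp: atMost_def[symmetric])
  moreover have "msp z f < \<tau> \<longleftrightarrow> (f (fst z), snd z) \<notin> Q" for z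
  proof -
    have "msp z f < \<tau> \<longleftrightarrow> \<not> (MAX c. f (fst z) $ c) \<le> - \<tau>" unfolding msp_def by linarith
    also have "\<dots> \<longleftrightarrow> \<not> (\<forall>c. f (fst z) $ c \<le> - \<tau>)" by (simp add: Max_le_iff)
    finally show ?thesis unfolding Q_def by simp
  qed
  ultimately show ?thesis unfolding Adv_mia_thr
    by (intro prob_diff_le_Dist_fam_not_mem[OF S D _ meas]) auto
qed

lemma Adv_ent_le_Dist_fam:
  fixes f :: "'x \<Rightarrow> real^'c::finite"
  assumes S: "S \<noteq> {#}" and D: "prob_space D"
    and meas: "(\<lambda>z. (f (fst z), snd z)) \<in> D \<rightarrow>\<^sub>M borel"
    and f_pos: "\<And>x c. 0 < f x $ c"
  shows "Adv (mia_thr ent \<tau>) f S D \<le> Dist_fam Q_cvx f S D"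
proof -
  define P where "P = {p \<in> {p::real^'c. \<forall>c. p$c \<in> {0<..}}. (\<Sum>c\<in>UNIV. p$c * ln (p$c)) \<le> - \<tau>}"
  define Q where "Q = P \<times> (UNIV :: (real^'c) set)"
  have "convex P" unfolding P_def
    by (intro convex_sublevel convex_on_sum_components convex_on_x_ln_x) simp
  moreover have "Q \<in> sets borel"
  proof -
    have "Q = {z. (\<forall>c. 0 < fst z $ c) \<and> (\<Sum>c\<in>UNIV. fst z $ c * ln (fst z $ c)) \<le> - \<tau>}"
      unfolding Q_def P_def by auto
    also have "\<dots> \<in> sets borel" by measurable
    finally show ?thesis .
  qed
  ultimately have "Q \<in> Q_cvx" unfolding Q_cvx_def Q_def by (simp add: convex_Times)
  moreover have "ent z f < \<tau> \<longleftrightarrow> (f (fst z), snd z) \<notin> Q" for z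
    using f_pos unfolding ent_def Q_def P_def by auto
  ultimately show ?thesis unfolding Adv_mia_thr
    by (intro prob_diff_le_Dist_fam_not_mem[OF S D _ meas]) auto
qed

theorem theorem1:
  fixes f :: "'x \<Rightarrow> real^'c::finite"
    and S :: "('x \<times> (real^'c)) multiset"
    and D :: "('x \<times> (real^'c)) measure"
    and \<tau> :: real
  assumes "CARD('c) \<ge> 2"
    and "\<And>x c. 0 < f x $ c \<and> f x $ c < 1"
    and "\<And>x. (\<Sum>c\<in>UNIV. f x $ c) = 1"
    and "S \<noteq> {#}"
    and "\<forall>z\<in>#S. one_hot (snd z)"
    and "prob_space D"
    and "\<forall>z\<in>space D. one_hot (snd z)"
    and "(\<lambda>z. (f (fst z), snd z)) \<in> D \<rightarrow>\<^sub>M borel"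
    and "m \<in> {mia_thr msp \<tau>, mia_thr ent \<tau>, mia_thr ce \<tau>, mia_thr me \<tau>}"
  shows "Adv m f S D \<le> Dist_fam Q_cvx f S D"
proof -
  have f_box: "f x \<in> open_unit_box" for x using assms(2) by (simp add: open_unit_box_def)
  note convex_score = prob_diff_convex_score_le_Dist_fam[OF assms(4,6,8,5,7) f_box]
  have "Adv (mia_thr msp \<tau>) f S D \<le> Dist_fam Q_cvx f S D"
    using assms(4,6,8) by (rule Adv_msp_le_Dist_fam)
  moreover have "Adv (mia_thr ent \<tau>) f S D \<le> Dist_fam Q_cvx f S D"
    using assms(4,6,8) assms(2)[THEN conjunct1] by (rule Adv_ent_le_Dist_fam)
  moreover have "Adv (mia_thr ce \<tau>) f S D \<le> Dist_fam Q_cvx f S D"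
    unfolding Adv_mia_thr ce_def
    by (rule convex_score[where F="\<lambda>y p. - (\<Sum>c\<in>UNIV. y $ c * ln (p $ c))"])
      (rule convex_on_ce_axis, measurable)
  moreover have "Adv (mia_thr me \<tau>) f S D \<le> Dist_fam Q_cvx f S D"
    unfolding Adv_mia_thr me_def
    by (rule convex_score[where F="\<lambda>y p. - (\<Sum>c\<in>UNIV. (1 - p $ c) * ln (p $ c) * y $ c
        + p $ c * ln (1 - p $ c) * (1 - y $ c))"])
      (rule convex_on_me_axis, measurable)
  ultimately show ?thesis using assms(9) by auto
qed

end
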